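(* Let $\mathcal Z,\mathcal S,\mathcal U$ be finite alphabets and let $p_{ZS}$, $p_{SU}$ be joint types of length-$n$ sequences on $\mathcal Z\times\mathcal S$ and $\mathcal S\times\mathcal U$ having the same $S$-marginal $p_S$. Define the pmf $P^\star_{ZSU}(z,s,u)=p_{Z|S}(z|s)p_{SU}(s,u)$, where $p_{Z|S}(z|s)=p_{ZS}(z,s)/p_S(s)$ when $p_S(s)>0$ (and $P^\star_{ZSU}(z,s,u)=0$ when $p_S(s)=0$). Let $$\mathcal A=\Big\{p_{Z_1S_1U_1}\in\mathcal P_n(\mathcal Z\times\mathcal S\times\mathcal U):\ p_{Z_1S_1}=p_{ZS},\ p_{S_1U_1}=p_{SU},\ |p_{Z_1S_1U_1}-P^\star_{ZSU}|_\infty\le\tfrac1n\Big\}.$$ Then $P^\star_{ZSU}$ belongs to the convex hull of $\mathcal A$.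
   Context: $\mathcal P_n(\mathcal Z\times\mathcal S\times\mathcal U)$ is the set of joint types of length-$n$ sequences, i.e., pmfs all of whose entries are integer multiples of $1/n$; $p_{Z_1S_1}$, $p_{S_1U_1}$ are marginals of $p_{Z_1S_1U_1}$; $|P-Q|_\infty=\max|P(\cdot)-Q(\cdot)|$. The convex hull of a finite set of vectors is the set of all their convex combinations. *)

theory Defs
  imports "HOL-Analysis.Analysis"
begin

definition is_pmf :: "real ^ ('a::finite) \<Rightarrow> bool" where
  "is_pmf P \<longleftrightarrow> (\<forall>x. P $ x \<ge> 0) \<and> (\<Sum>x\<in>UNIV. P $ x) = 1"

definition types :: "nat \<Rightarrow> (real ^ ('a::finite)) set" where
  "types n = {P. is_pmf P \<and> (\<forall>x. \<exists>k::nat. P $ x = real k / real n)}"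

definition marg_ZS :: "real ^ ('z::finite \<times> 's::finite \<times> 'u::finite) \<Rightarrow> real ^ ('z \<times> 's)" where
  "marg_ZS P = (\<chi> p. case p of (z,s) \<Rightarrow> \<Sum>u\<in>UNIV. P $ (z,s,u))"

definition marg_SU :: "real ^ ('z::finite \<times> 's::finite \<times> 'u::finite) \<Rightarrow> real ^ ('s \<times> 'u)" where
  "marg_SU P = (\<chi> p. case p of (s,u) \<Rightarrow> \<Sum>z\<in>UNIV. P $ (z,s,u))"

definition marg_S_of_ZS :: "real ^ ('z::finite \<times> 's::finite) \<Rightarrow> real ^ 's" where
  "marg_S_of_ZS P = (\<chi> s. \<Sum>z\<in>UNIV. P $ (z,s))"

definition marg_S_of_SU :: "real ^ ('s::finite \<times> 'u::finite) \<Rightarrow> real ^ 's" where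
  "marg_S_of_SU P = (\<chi> s. \<Sum>u\<in>UNIV. P $ (s,u))"

definition Pstar :: "real ^ ('z::finite \<times> 's::finite) \<Rightarrow> real ^ ('s \<times> 'u::finite)
    \<Rightarrow> real ^ ('z \<times> 's \<times> 'u)" where
  "Pstar pZS pSU = (\<chi> p. case p of (z,s,u) \<Rightarrow> if marg_S_of_ZS pZS $ s > 0
      then pZS $ (z,s) / marg_S_of_ZS pZS $ s * pSU $ (s,u) else 0)"

definition dist_inf :: "real ^ ('a::finite) \<Rightarrow> real ^ 'a \<Rightarrow> real" where
  "dist_inf P Q = Max (range (\<lambda>x. \<bar>P $ x - Q $ x\<bar>))"

end

theory Submission
  imports Defs
begin

text \<open>Scaling by \<open>n\<close>, the array \<open>Y = n P*\<close> has integral line sums along both projections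
  \<open>(z, s, u) \<mapsto> (z, s)\<close> and \<open>(z, s, u) \<mapsto> (s, u)\<close>, namely \<open>n p_ZS\<close> and \<open>n p_SU\<close>.
  Such an array is a convex combination of integral arrays \<open>X\<close> with the same line sums and
  \<open>\<lfloor>Y\<rfloor> \<le> X \<le> \<lceil>Y\<rceil>\<close>. By induction on the number of fractional entries: every line through a
  fractional entry contains a second one, so a dimension count yields a nonzero direction \<open>D\<close>,
  supported on the fractional entries, with vanishing line sums; moving from \<open>Y\<close> along \<open>D\<close> and
  along \<open>-D\<close> until a further entry becomes integral exhibits \<open>Y\<close> as a convex combination of two
  arrays with fewer fractional entries. Each \<open>X / n\<close> is then a type with the marginals
  \<open>p_ZS\<close>, \<open>p_SU\<close> at sup-distance at most \<open>1 / n\<close> from \<open>P*\<close>.\<close>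

definition fiber_sum :: "('e::finite \<Rightarrow> 'k) \<Rightarrow> real^'e \<Rightarrow> 'k \<Rightarrow> real" where
  "fiber_sum r Y i = (\<Sum>e | r e = i. Y$e)"

lemma sum_fiber_sum:
  fixes r :: "'e::finite \<Rightarrow> 'k::finite"
  shows "(\<Sum>i\<in>UNIV. fiber_sum r Y i) = (\<Sum>e\<in>UNIV. Y$e)"
  unfolding fiber_sum_def using sum.group[of UNIV UNIV r "\<lambda>e. Y$e"] by simp

lemma fiber_sum_add [simp]: "fiber_sum r (X + Y) i = fiber_sum r X i + fiber_sum r Y i"
  by (simp add: fiber_sum_def sum.distrib)

lemma fiber_sum_scaleR [simp]: "fiber_sum r (a *\<^sub>R Y) i = a * fiber_sum r Y i"
  by (simp add: fiber_sum_def sum_distrib_left)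

lemma fiber_sum_uminus [simp]: "fiber_sum r (- Y) i = - fiber_sum r Y i"
  by (simp add: fiber_sum_def sum_negf)

lemma two_mul_card_image_le:
  assumes "finite F" and "\<forall>e\<in>F. \<exists>e'\<in>F. e' \<noteq> e \<and> g e' = g e"
  shows "2 * card (g ` F) \<le> card F"
proof -
  have "2 \<le> card {e\<in>F. g e = i}" if i: "i \<in> g ` F" for i
  proof -
    obtain e where e: "e \<in> F" "g e = i" using i by blast
    then obtain e' where e': "e' \<in> F" "e' \<noteq> e" "g e' = g e" using assms(2) by blast
    have "card {e, e'} \<le> card {e\<in>F. g e = i}"
      using e e' assms(1) by (intro card_mono) auto
    then show ?thesis using e' by simp
  qed
  then have "(\<Sum>i\<in>g ` F. 2) \<le> (\<Sum>i\<in>g ` F. card {e\<in>F. g e = i})" by (intro sum_mono) auto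
  also have "\<dots> = card F"
    using sum.group[of F "g ` F" g "\<lambda>_. 1::nat"] assms(1) by simp
  finally show ?thesis by simp
qed

lemma linear_kernel_nontrivial:
  fixes f :: "'a::euclidean_space \<Rightarrow> 'b::euclidean_space"
  assumes "linear f" and "subspace V" and "f ` V \<subseteq> W" and "dim W < dim V"
  shows "\<exists>x\<in>V. x \<noteq> 0 \<and> f x = 0"
proof (rule ccontr)
  assume "\<not> ?thesis"
  then have "inj_on f V" using linear_inj_on_iff_eq_0[OF assms(1,2)] by blast
  moreover have "span V = V" using assms(2) by (rule span_eq_iff[THEN iffD2])
  ultimately have "dim V = dim (f ` V)" using dim_image_eq[OF assms(1), of V] by metis
  also have "\<dots> \<le> dim W" using assms(3) by (rule dim_subset)
  finally show False using assms(4) by simp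
qed

lemma fiber_sum_outside_image:
  assumes "\<forall>e. e \<notin> F \<longrightarrow> x$e = 0" and "i \<notin> g ` F"
  shows "fiber_sum g x i = 0"
  unfolding fiber_sum_def using assms by (intro sum.neutral) auto

lemma fiber_sum_eq_0_if_all_but_one:
  fixes r :: "'e::finite \<Rightarrow> 'r::finite" and c :: "'e \<Rightarrow> 'c::finite"
  assumes "\<forall>i. fiber_sum r D i = 0" and "\<forall>j. j \<noteq> k \<longrightarrow> fiber_sum c D j = 0"
  shows "fiber_sum c D j = 0"
proof -
  have "fiber_sum c D k + (\<Sum>j\<in>UNIV - {k}. fiber_sum c D j) = (\<Sum>i\<in>UNIV. fiber_sum r D i)"
    by (simp add: sum_fiber_sum flip: sum.remove)
  then have "fiber_sum c D k = 0"
    using assms by simp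
  then show ?thesis
    using assms(2) by (cases "j = k") auto
qed

lemma fiber_sums_kernel_nontrivial:
  fixes F :: "'e::finite set" and r :: "'e \<Rightarrow> 'r::finite" and c :: "'e \<Rightarrow> 'c::finite"
  assumes "F \<noteq> {}"
    and r_mates: "\<forall>e\<in>F. \<exists>e'\<in>F. e' \<noteq> e \<and> r e' = r e"
    and c_mates: "\<forall>e\<in>F. \<exists>e'\<in>F. e' \<noteq> e \<and> c e' = c e"
  shows "\<exists>D. D \<noteq> 0 \<and> (\<forall>e. e \<notin> F \<longrightarrow> D$e = 0) \<and>
    (\<forall>i. fiber_sum r D i = 0) \<and> (\<forall>j. fiber_sum c D j = 0)"
proof -
  obtain c0 where c0: "c0 \<in> c ` F" using assms(1) by auto
  define V where "V = {x::real^'e. \<forall>e. e \<notin> F \<longrightarrow> x$e = 0}"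
  \<comment> \<open>Leaving out the fiber of \<open>c0\<close>, which the others determine, brings the target dimension
     down to \<open>card (r ` F) + card (c ` F) - 1\<close>; this is less than \<open>card F\<close> because every fiber
     that meets \<open>F\<close> meets it at least twice.\<close>
  define K where "K = Inl ` r ` F \<union> Inr ` (c ` F - {c0})"
  define W where "W = {y::real^('r+'c). \<forall>k. k \<notin> K \<longrightarrow> y$k = 0}"
  define L where "L x = (\<chi> k. case k of Inl i \<Rightarrow> fiber_sum r x i
      | Inr j \<Rightarrow> if j = c0 then 0 else fiber_sum c x j)" for x :: "real^'e"
  have "linear L"
    by (rule linearI) (auto simp: L_def vec_eq_iff split: sum.split)
  moreover have "subspace V"
    unfolding subspace_def V_def by auto
  moreover have "L ` V \<subseteq> W"
  proof (clarsimp simp: W_def)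
    fix x k assume x: "x \<in> V" and k: "k \<notin> K"
    show "L x $ k = 0"
    proof (cases k)
      case (Inl i)
      then have "i \<notin> r ` F" using k by (auto simp: K_def)
      then show ?thesis using x Inl by (simp add: L_def V_def fiber_sum_outside_image)
    next
      case (Inr j)
      then have "j = c0 \<or> j \<notin> c ` F" using k by (auto simp: K_def)
      then show ?thesis using x Inr by (auto simp: L_def V_def fiber_sum_outside_image)
    qed
  qed
  moreover have "dim W < dim V"
  proof -
    have "2 * card (r ` F) \<le> card F" "2 * card (c ` F) \<le> card F"
      using two_mul_card_image_le[OF finite r_mates] two_mul_card_image_le[OF finite c_mates] by auto
    moreover have "card (c ` F) > 0"
      using c0 by (auto simp: card_gt_0_iff)
    moreover have "card K = card (r ` F) + (card (c ` F) - 1)"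
      unfolding K_def using c0 by (subst card_Un_disjoint) (auto simp: card_image)
    ultimately have "card K < card F" by linarith
    then show ?thesis
      unfolding V_def W_def dim_vec_eq[symmetric] dim_substandard_cart .
  qed
  ultimately obtain D where D: "D \<in> V" "D \<noteq> 0" "L D = 0"
    using linear_kernel_nontrivial by blast
  have r_zero: "fiber_sum r D i = 0" for i
    using arg_cong[OF D(3), of "\<lambda>y. y $ Inl i"] by (simp add: L_def)
  have c_zero: "fiber_sum c D j = 0" if "j \<noteq> c0" for j
    using arg_cong[OF D(3), of "\<lambda>y. y $ Inr j"] that by (simp add: L_def)
  then have "fiber_sum c D j = 0" for j
    using fiber_sum_eq_0_if_all_but_one[where r=r and c=c and k=c0] r_zero c_zero by blast
  then show ?thesis
    using D(1,2) r_zero unfolding V_def by blast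
qed

lemma fiber_sum_int_imp_fractional_mate:
  assumes "fiber_sum r Y (r e) \<in> \<int>" and "Y$e \<notin> \<int>"
  shows "\<exists>e'. e' \<noteq> e \<and> r e' = r e \<and> Y$e' \<notin> \<int>"
proof (rule ccontr)
  assume "\<not> ?thesis"
  then have rest: "(\<Sum>e' | r e' = r e \<and> e' \<noteq> e. Y$e') \<in> \<int>"
    by (intro Ints_sum) auto
  have "fiber_sum r Y (r e) = Y$e + (\<Sum>e' | r e' = r e \<and> e' \<noteq> e. Y$e')"
    unfolding fiber_sum_def by (subst sum.remove[of _ e]) (auto intro: sum.cong)
  then have "Y$e \<in> \<int>"
    using assms(1) rest by (metis Ints_diff add_diff_cancel_right')
  then show False using assms(2) by simp
qed

lemma floor_less_not_Ints: "x \<notin> \<int> \<Longrightarrow> of_int \<lfloor>x\<rfloor> < x"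
  by (metis Ints_of_int floor_correct order_less_le)

lemma less_ceiling_not_Ints: "x \<notin> \<int> \<Longrightarrow> x < of_int \<lceil>x\<rceil>"
  by (metis Ints_of_int ceiling_correct order_less_le)

lemma exists_step_fewer_fractional:
  fixes Y D :: "real^'e::finite"
  assumes "D \<noteq> 0" and "\<forall>e. Y$e \<in> \<int> \<longrightarrow> D$e = 0"
  shows "\<exists>t>0. (\<forall>e. of_int \<lfloor>Y$e\<rfloor> \<le> Y$e + t * D$e \<and> Y$e + t * D$e \<le> of_int \<lceil>Y$e\<rceil>) \<and>
    card {e. Y$e + t * D$e \<notin> \<int>} < card {e. Y$e \<notin> \<int>}"
proof -
  define G where "G = {e. D$e \<noteq> 0}"
  define step where "step e = (if D$e > 0 then of_int \<lceil>Y$e\<rceil> - Y$e else of_int \<lfloor>Y$e\<rfloor> - Y$e) / D$e" for e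
  have fractional: "of_int \<lfloor>Y$e\<rfloor> < Y$e \<and> Y$e < of_int \<lceil>Y$e\<rceil>" if "e \<in> G" for e
    using that assms(2) floor_less_not_Ints less_ceiling_not_Ints unfolding G_def by blast
  have step_pos: "step e > 0" if "e \<in> G" for e
    using fractional[OF that] that unfolding G_def step_def
    by (auto simp: divide_neg_neg)
  define t where "t = Min (step ` G)"
  have "G \<noteq> {}" using assms(1) by (auto simp: G_def vec_eq_iff)
  then have t_in: "t \<in> step ` G" unfolding t_def by (intro Min_in) auto
  then have "t > 0" using step_pos by auto
  have t_le: "t \<le> step e" if "e \<in> G" for e
    unfolding t_def using that by simp
  have box: "of_int \<lfloor>Y$e\<rfloor> \<le> Y$e + t * D$e \<and> Y$e + t * D$e \<le> of_int \<lceil>Y$e\<rceil>" for e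
  proof (cases "e \<in> G")
    case False
    then show ?thesis by (simp add: G_def ceiling_correct)
  next
    case True
    consider "D$e > 0" | "D$e < 0" using True G_def by force
    then show ?thesis
    proof cases
      case 1
      then have "0 < t * D$e" "t * D$e \<le> step e * D$e"
        using t_le[OF True] \<open>t > 0\<close> by (simp_all add: mult_right_mono)
      then show ?thesis using 1 fractional[OF True] by (simp add: step_def)
    next
      case 2
      then have "t * D$e < 0" "step e * D$e \<le> t * D$e"
        using t_le[OF True] \<open>t > 0\<close> by (simp_all add: mult_pos_neg mult_right_mono_neg)
      then show ?thesis using 2 fractional[OF True] by (simp add: step_def)
    qed
  qed
  obtain e0 where e0: "e0 \<in> G" "t = step e0" using t_in by auto
  have "Y$e0 + t * D$e0 \<in> \<int>"
    using e0 by (simp add: G_def step_def)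
  moreover have "Y$e0 \<notin> \<int>" using e0(1) assms(2) by (auto simp: G_def)
  ultimately have "{e. Y$e + t * D$e \<notin> \<int>} \<subset> {e. Y$e \<notin> \<int>}"
    using assms(2) by auto
  then have "card {e. Y$e + t * D$e \<notin> \<int>} < card {e. Y$e \<notin> \<int>}"
    by (intro psubset_card_mono) auto
  then show ?thesis using \<open>t > 0\<close> box by blast
qed

definition roundings :: "('e::finite \<Rightarrow> 'r) \<Rightarrow> ('e \<Rightarrow> 'c) \<Rightarrow> real^'e \<Rightarrow> (real^'e) set" where
  "roundings r c Y = {X. (\<forall>e. X$e \<in> \<int> \<and> of_int \<lfloor>Y$e\<rfloor> \<le> X$e \<and> X$e \<le> of_int \<lceil>Y$e\<rceil>) \<and>
     (\<forall>i. fiber_sum r X i = fiber_sum r Y i) \<and> (\<forall>j. fiber_sum c X j = fiber_sum c Y j)}"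

lemma roundings_subset:
  assumes "\<forall>e. of_int \<lfloor>Y$e\<rfloor> \<le> Y'$e \<and> Y'$e \<le> of_int \<lceil>Y$e\<rceil>"
    and "\<forall>i. fiber_sum r Y' i = fiber_sum r Y i" and "\<forall>j. fiber_sum c Y' j = fiber_sum c Y j"
  shows "roundings r c Y' \<subseteq> roundings r c Y"
proof -
  have "of_int \<lfloor>Y$e\<rfloor> \<le> X$e \<and> X$e \<le> of_int \<lceil>Y$e\<rceil>" if "X \<in> roundings r c Y'" for X e
  proof -
    have "\<lfloor>Y$e\<rfloor> \<le> \<lfloor>Y'$e\<rfloor>" "\<lceil>Y'$e\<rceil> \<le> \<lceil>Y$e\<rceil>"
      using assms(1) by (simp_all add: le_floor_iff ceiling_le_iff)
    moreover have "of_int \<lfloor>Y'$e\<rfloor> \<le> X$e" "X$e \<le> of_int \<lceil>Y'$e\<rceil>"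
      using that by (simp_all add: roundings_def)
    ultimately show ?thesis by linarith
  qed
  then show ?thesis
    using assms(2,3) by (auto simp: roundings_def)
qed

lemma exists_step_roundings_subset:
  assumes "E \<noteq> 0" and "\<forall>e. Y$e \<in> \<int> \<longrightarrow> E$e = 0"
    and "\<forall>i. fiber_sum r E i = 0" and "\<forall>j. fiber_sum c E j = 0"
  shows "\<exists>t>0. card {e. (Y + t *\<^sub>R E)$e \<notin> \<int>} < card {e. Y$e \<notin> \<int>} \<and>
    (\<forall>i. fiber_sum r (Y + t *\<^sub>R E) i = fiber_sum r Y i) \<and>
    (\<forall>j. fiber_sum c (Y + t *\<^sub>R E) j = fiber_sum c Y j) \<and>
    roundings r c (Y + t *\<^sub>R E) \<subseteq> roundings r c Y"
proof -
  obtain t where t: "t > 0"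
    "\<forall>e. of_int \<lfloor>Y$e\<rfloor> \<le> (Y + t *\<^sub>R E)$e \<and> (Y + t *\<^sub>R E)$e \<le> of_int \<lceil>Y$e\<rceil>"
    "card {e. (Y + t *\<^sub>R E)$e \<notin> \<int>} < card {e. Y$e \<notin> \<int>}"
    using exists_step_fewer_fractional[OF assms(1,2)] by auto
  moreover have "\<forall>i. fiber_sum r (Y + t *\<^sub>R E) i = fiber_sum r Y i"
    "\<forall>j. fiber_sum c (Y + t *\<^sub>R E) j = fiber_sum c Y j"
    using assms(3,4) by simp_all
  ultimately show ?thesis
    using roundings_subset by blast
qed

lemma in_convex_opposite_steps:
  fixes Y D :: "'a::real_vector"
  assumes "convex S" and "t1 > 0" and "t2 > 0"
    and "Y + t1 *\<^sub>R D \<in> S" and "Y + t2 *\<^sub>R (- D) \<in> S"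
  shows "Y \<in> S"
proof -
  define a b where "a = t2 / (t1 + t2)" and "b = t1 / (t1 + t2)"
  have "a + b = 1" "a * t1 - b * t2 = 0"
    using assms(2,3) by (simp_all add: a_def b_def flip: add_divide_distrib)
  moreover have "a *\<^sub>R (Y + t1 *\<^sub>R D) + b *\<^sub>R (Y + t2 *\<^sub>R (- D)) = (a + b) *\<^sub>R Y + (a * t1 - b * t2) *\<^sub>R D"
    by (simp add: algebra_simps)
  ultimately have "Y = a *\<^sub>R (Y + t1 *\<^sub>R D) + b *\<^sub>R (Y + t2 *\<^sub>R (- D))"
    by simp
  also have "\<dots> \<in> S"
    using assms \<open>a + b = 1\<close> by (intro convexD) (auto simp: a_def b_def)
  finally show ?thesis .
qed

lemma in_convex_hull_roundings:
  fixes r :: "'e::finite \<Rightarrow> 'r::finite" and c :: "'e \<Rightarrow> 'c::finite"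
  assumes "\<forall>i. fiber_sum r Y i \<in> \<int>" and "\<forall>j. fiber_sum c Y j \<in> \<int>"
  shows "Y \<in> convex hull (roundings r c Y)"
  using assms
proof (induction "card {e. Y$e \<notin> \<int>}" arbitrary: Y rule: less_induct)
  case less
  define F where "F = {e. Y$e \<notin> \<int>}"
  show ?case
  proof (cases "F = {}")
    case True
    then have "Y \<in> roundings r c Y"
      unfolding roundings_def F_def by (auto elim!: Ints_cases)
    then show ?thesis by (rule hull_inc)
  next
    case False
    have mates: "\<forall>e\<in>F. \<exists>e'\<in>F. e' \<noteq> e \<and> r e' = r e" "\<forall>e\<in>F. \<exists>e'\<in>F. e' \<noteq> e \<and> c e' = c e"
      using fiber_sum_int_imp_fractional_mate less.prems unfolding F_def by (metis mem_Collect_eq)+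
    obtain D where D: "D \<noteq> 0" "\<forall>e. Y$e \<in> \<int> \<longrightarrow> D$e = 0"
      "\<forall>i. fiber_sum r D i = 0" "\<forall>j. fiber_sum c D j = 0"
      using fiber_sums_kernel_nontrivial[OF False mates] unfolding F_def by auto
    have move: "\<exists>t>0. Y + t *\<^sub>R E \<in> convex hull (roundings r c Y)"
      if E: "E \<noteq> 0" "\<forall>e. Y$e \<in> \<int> \<longrightarrow> E$e = 0"
        "\<forall>i. fiber_sum r E i = 0" "\<forall>j. fiber_sum c E j = 0" for E
    proof -
      obtain t where t: "t > 0" "card {e. (Y + t *\<^sub>R E)$e \<notin> \<int>} < card {e. Y$e \<notin> \<int>}"
        and fibers: "\<forall>i. fiber_sum r (Y + t *\<^sub>R E) i = fiber_sum r Y i"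
          "\<forall>j. fiber_sum c (Y + t *\<^sub>R E) j = fiber_sum c Y j"
        and sub: "roundings r c (Y + t *\<^sub>R E) \<subseteq> roundings r c Y"
        using exists_step_roundings_subset[OF E] by blast
      have "Y + t *\<^sub>R E \<in> convex hull (roundings r c (Y + t *\<^sub>R E))"
        using less.hyps[OF t(2)] less.prems unfolding fibers[rule_format] by blast
      also have "\<dots> \<subseteq> convex hull (roundings r c Y)"
        using sub by (rule hull_mono)
      finally show ?thesis using t(1) by blast
    qed
    obtain t1 t2 where "t1 > 0" "t2 > 0" "Y + t1 *\<^sub>R D \<in> convex hull (roundings r c Y)"
      "Y + t2 *\<^sub>R (- D) \<in> convex hull (roundings r c Y)"
      using move[of D] move[of "- D"] D by auto
    then show ?thesis
      by (rule in_convex_opposite_steps[OF convex_convex_hull])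
  qed
qed

lemma fiber_sum_apsnd_fst: "fiber_sum (apsnd fst) P (z, s) = (\<Sum>u\<in>UNIV. P $ (z, s, u))"
proof -
  have fiber: "{e. apsnd fst e = (z, s)} = range (\<lambda>u. (z, s, u))" by force
  show ?thesis unfolding fiber_sum_def fiber by (simp add: sum.reindex inj_def)
qed

lemma fiber_sum_snd: "fiber_sum snd P (s, u) = (\<Sum>z\<in>UNIV. P $ (z, s, u))"
proof -
  have fiber: "{e. snd e = (s, u)} = range (\<lambda>z. (z, s, u))" by force
  show ?thesis unfolding fiber_sum_def fiber by (simp add: sum.reindex inj_def)
qed

lemma marg_ZS_eq_fiber_sum: "marg_ZS P $ i = fiber_sum (apsnd fst) P i"
  by (cases i) (simp add: marg_ZS_def fiber_sum_apsnd_fst)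

lemma marg_SU_eq_fiber_sum: "marg_SU P $ j = fiber_sum snd P j"
  by (cases j) (simp add: marg_SU_def fiber_sum_snd)

lemma Pstar_nonneg:
  assumes "\<forall>x. pZS $ x \<ge> 0" and "\<forall>x. pSU $ x \<ge> 0"
  shows "Pstar pZS pSU $ e \<ge> 0"
  using assms by (cases e) (simp add: Pstar_def)

lemma marg_ZS_Pstar:
  assumes "\<forall>x. pZS $ x \<ge> 0" and "marg_S_of_ZS pZS = marg_S_of_SU pSU"
  shows "marg_ZS (Pstar pZS pSU) = pZS"
proof -
  have "(\<Sum>u\<in>UNIV. Pstar pZS pSU $ (z, s, u)) = pZS $ (z, s)" for z s
  proof (cases "marg_S_of_ZS pZS $ s > 0")
    case True
    have "(\<Sum>u\<in>UNIV. Pstar pZS pSU $ (z, s, u))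
        = pZS $ (z, s) / marg_S_of_ZS pZS $ s * (\<Sum>u\<in>UNIV. pSU $ (s, u))"
      using True by (simp add: Pstar_def sum_distrib_left)
    also have "(\<Sum>u\<in>UNIV. pSU $ (s, u)) = marg_S_of_ZS pZS $ s"
      using assms(2) by (simp add: marg_S_of_SU_def)
    finally show ?thesis
      using True by simp
  next
    case False
    then have "(\<Sum>z\<in>UNIV. pZS $ (z, s)) = 0"
      using assms(1) by (simp add: marg_S_of_ZS_def sum_nonneg antisym_conv2)
    then have "pZS $ (z, s) = 0"
      using assms(1) by (simp add: sum_nonneg_eq_0_iff)
    then show ?thesis using False by (simp add: Pstar_def)
  qed
  then show ?thesis by (simp add: marg_ZS_def vec_eq_iff split: prod.split)
qed

lemma marg_SU_Pstar:
  assumes "\<forall>x. pSU $ x \<ge> 0" and "marg_S_of_ZS pZS = marg_S_of_SU pSU"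
  shows "marg_SU (Pstar pZS pSU) = pSU"
proof -
  have "(\<Sum>z\<in>UNIV. Pstar pZS pSU $ (z, s, u)) = pSU $ (s, u)" for s u
  proof (cases "marg_S_of_ZS pZS $ s > 0")
    case True
    have "(\<Sum>z\<in>UNIV. pZS $ (z, s)) = marg_S_of_ZS pZS $ s"
      by (simp add: marg_S_of_ZS_def)
    then show ?thesis
      using True by (simp add: Pstar_def flip: sum_distrib_right sum_divide_distrib)
  next
    case False
    then have "(\<Sum>u\<in>UNIV. pSU $ (s, u)) = 0"
      using assms by (simp add: marg_S_of_SU_def sum_nonneg antisym_conv2)
    then have "pSU $ (s, u) = 0"
      using assms(1) by (simp add: sum_nonneg_eq_0_iff)
    then show ?thesis using False by (simp add: Pstar_def)
  qed
  then show ?thesis by (simp add: marg_SU_def vec_eq_iff split: prod.split)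
qed

lemma types_scaled_Ints:
  assumes "Q \<in> types n" and "n \<ge> 1"
  shows "real n * Q $ x \<in> \<int>"
proof -
  obtain k :: nat where "Q $ x = real k / real n"
    using assms(1) by (auto simp: types_def)
  then show ?thesis using assms(2) by simp
qed

lemma scaleR_rounding_in_types:
  fixes r :: "'e::finite \<Rightarrow> 'r::finite"
  assumes "n \<ge> 1" and "is_pmf P" and X: "X \<in> roundings r c (real n *\<^sub>R P)"
  shows "(1 / real n) *\<^sub>R X \<in> types n"
proof -
  have "(\<Sum>e\<in>UNIV. X$e) = (\<Sum>i\<in>UNIV. fiber_sum r X i)"
    by (simp add: sum_fiber_sum)
  also have "\<dots> = (\<Sum>i\<in>UNIV. fiber_sum r (real n *\<^sub>R P) i)"
    using X by (simp add: roundings_def)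
  also have "\<dots> = real n"
    using assms(2) by (simp add: sum_fiber_sum is_pmf_def flip: sum_distrib_left)
  finally have sum_X: "(\<Sum>e\<in>UNIV. X$e) = real n" .
  have X_nonneg: "0 \<le> X$e" and "X$e \<in> \<int>" for e
  proof -
    have "0 \<le> real n * P$e"
      using assms(2) by (simp add: is_pmf_def)
    then show "0 \<le> X$e" and "X$e \<in> \<int>"
      using X unfolding roundings_def by (auto intro: order_trans[rotated])
  qed
  then have "X$e \<in> \<nat>" for e
    by (simp add: Nats_altdef2)
  then have X_nat: "\<exists>k::nat. X$e = real k" for e
    by (auto elim: Nats_cases)
  then show ?thesis
    using sum_X X_nonneg X_nat assms(1) unfolding types_def is_pmf_def
    by (auto simp flip: sum_divide_distrib)
qed

lemma dist_inf_scaleR_rounding: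
  assumes "n \<ge> 1" and X: "X \<in> roundings r c (real n *\<^sub>R P)"
  shows "dist_inf ((1 / real n) *\<^sub>R X) P \<le> 1 / real n"
proof -
  have "\<bar>((1 / real n) *\<^sub>R X) $ e - P $ e\<bar> \<le> 1 / real n" for e
  proof -
    have "of_int \<lfloor>real n * P$e\<rfloor> \<le> X$e" "X$e \<le> of_int \<lceil>real n * P$e\<rceil>"
      using X by (simp_all add: roundings_def)
    then have "\<bar>X$e - real n * P$e\<bar> \<le> 1"
      using floor_correct[of "real n * P$e"] ceiling_correct[of "real n * P$e"]
      unfolding abs_le_iff by linarith
    moreover have "((1 / real n) *\<^sub>R X) $ e - P $ e = (X$e - real n * P$e) / real n"
      using assms(1) by (simp add: field_simps)
    ultimately show ?thesis
      using assms(1) by (simp add: abs_div divide_right_mono)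
  qed
  then show ?thesis
    unfolding dist_inf_def by (subst Max_le_iff) auto
qed

lemma is_pmf_Pstar:
  assumes "is_pmf pZS" and "is_pmf pSU" and "marg_S_of_ZS pZS = marg_S_of_SU pSU"
  shows "is_pmf (Pstar pZS pSU)"
proof -
  have "(\<Sum>e\<in>UNIV. Pstar pZS pSU $ e) = (\<Sum>i\<in>UNIV. marg_ZS (Pstar pZS pSU) $ i)"
    by (simp add: marg_ZS_eq_fiber_sum sum_fiber_sum)
  also have "\<dots> = 1"
    using assms by (simp add: is_pmf_def marg_ZS_Pstar)
  finally show ?thesis
    using assms(1,2) by (simp add: is_pmf_def Pstar_nonneg)
qed

lemma in_convex_hull_scaleR_roundings:
  fixes r :: "'e::finite \<Rightarrow> 'r::finite" and c :: "'e \<Rightarrow> 'c::finite"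
  assumes "n > 0" and "\<forall>i. n * fiber_sum r P i \<in> \<int>" and "\<forall>j. n * fiber_sum c P j \<in> \<int>"
  shows "P \<in> convex hull ((\<lambda>X. (1 / n) *\<^sub>R X) ` roundings r c (n *\<^sub>R P))"
proof -
  have "n *\<^sub>R P \<in> convex hull (roundings r c (n *\<^sub>R P))"
    using assms(2,3) by (intro in_convex_hull_roundings) simp_all
  then have "(1 / n) *\<^sub>R (n *\<^sub>R P) \<in> (\<lambda>X. (1 / n) *\<^sub>R X) ` (convex hull (roundings r c (n *\<^sub>R P)))"
    by blast
  then show ?thesis
    using assms(1) by (simp add: convex_hull_scaling)
qed

lemma scaleR_roundings_subset:
  fixes P :: "real^('z::finite \<times> 's::finite \<times> 'u::finite)"
  assumes "n \<ge> 1" and "is_pmf P"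
  shows "(\<lambda>X. (1 / real n) *\<^sub>R X) ` roundings (apsnd fst) snd (real n *\<^sub>R P) \<subseteq>
    {Q \<in> types n. marg_ZS Q = marg_ZS P \<and> marg_SU Q = marg_SU P \<and> dist_inf Q P \<le> 1 / real n}"
proof (rule image_subsetI)
  fix X assume X: "X \<in> roundings (apsnd fst) snd (real n *\<^sub>R P)"
  then have "fiber_sum (apsnd fst) X i = real n * fiber_sum (apsnd fst) P i"
    "fiber_sum snd X j = real n * fiber_sum snd P j" for i j
    by (simp_all add: roundings_def del: split_paired_All)
  then have "marg_ZS ((1 / real n) *\<^sub>R X) = marg_ZS P" "marg_SU ((1 / real n) *\<^sub>R X) = marg_SU P"
    using assms(1) by (simp_all add: vec_eq_iff marg_ZS_eq_fiber_sum marg_SU_eq_fiber_sum)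
  then show "(1 / real n) *\<^sub>R X \<in>
      {Q \<in> types n. marg_ZS Q = marg_ZS P \<and> marg_SU Q = marg_SU P \<and> dist_inf Q P \<le> 1 / real n}"
    using X assms by (simp add: scaleR_rounding_in_types dist_inf_scaleR_rounding)
qed

theorem lemma8:
  fixes n :: nat
    and pZS :: "real ^ ('z::finite \<times> 's::finite)"
    and pSU :: "real ^ ('s \<times> 'u::finite)"
  assumes "n \<ge> 1"
    and "pZS \<in> types n"
    and "pSU \<in> types n"
    and "marg_S_of_ZS pZS = marg_S_of_SU pSU"
  shows "Pstar pZS pSU \<in> convex hull
    {P \<in> types n. marg_ZS P = pZS \<and> marg_SU P = pSU \<and>
        dist_inf P (Pstar pZS pSU) \<le> 1 / real n}"
proof -
  define P where "P = Pstar pZS pSU"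
  have pmfs: "is_pmf pZS" "is_pmf pSU"
    using assms(2,3) by (simp_all add: types_def)
  then have marg_P: "marg_ZS P = pZS" "marg_SU P = pSU"
    using assms(4) by (simp_all add: P_def is_pmf_def marg_ZS_Pstar marg_SU_Pstar)
  have "P \<in> convex hull ((\<lambda>X. (1 / real n) *\<^sub>R X) ` roundings (apsnd fst) snd (real n *\<^sub>R P))"
    using assms(1-3) marg_P
    by (intro in_convex_hull_scaleR_roundings allI)
      (simp_all add: types_scaled_Ints flip: marg_ZS_eq_fiber_sum marg_SU_eq_fiber_sum)
  also have "\<dots> \<subseteq> convex hull {Q \<in> types n. marg_ZS Q = pZS \<and> marg_SU Q = pSU \<and> dist_inf Q P \<le> 1 / real n}"
    using scaleR_roundings_subset[OF assms(1) is_pmf_Pstar[OF pmfs assms(4)]] marg_P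
    unfolding P_def by (intro hull_mono) simp
  finally show ?thesis
    unfolding P_def .
qed

end
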